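(* Let $\varphi$ be an $N$-function with right derivative $p=\varphi'_+$. Then for every $f\in\mathcal M_{\varphi,w}$ with $f\neq0$, $$\bar k^{**}(f)=\sup\Big\{k>0:\rho_{\varphi_*,w}\Big(p\Big(\tfrac{k(f^* )^0}{w}\Big)\Big)\le1\Big\}<\infty .$$
   Context: Let $I=[0,\gamma)$, $0<\gamma\le\infty$, Lebesgue measure $m$, $L_0$ the measurable functions on $I$, $f^*$ the decreasing rearrangement of $f$. Orlicz function: convex $\varphi:[0,\infty)\to[0,\infty)$, $\varphi(0)=0$, $\varphi(u)>0$ for $u>0$; $N$-function: additionally $\lim_{u\to0}\varphi(u)/u=0$ and $\lim_{u\to\infty}\varphi(u)/u=\infty$. Complementary function $\varphi_*(v)=\sup_{u>0}(uv-\varphi(u))$. Weight: positive decreasing locally integrable $w$ on $I$, $W(t)=\int_0^tw$, $W(\infty)=\infty$ if $\gamma=\infty$. Orlicz–Lorentz modular $\rho_{\psi,w}(g)=\int_I\psi(g^* )w$. Halperin level function $g^0$ of $g\ge0$ w.r.t. $w$: with $G(a,b)=\int_a^bg$, $W(a,b)=\int_a^bw$, $(a,b]$ is a level interval if $G(a,t)/W(a,t)\le G(a,b)/W(a,b)$ for all $t\in(a,b]$, maximal if not contained in another; $g^0=\frac{G(a,b)}{W(a,b)}w$ on each maximal level interval and $g^0=g$ elsewhere. $Q_{\varphi,w}(f)=\int_I\varphi((f^* )^0/w)w$ and $\mathcal M_{\varphi,w}=\{f:Q_{\varphi,w}(kf)<\infty\text{ for some }k>0\}$. *)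

theory Defs
  imports "HOL-Analysis.Analysis"
begin

definition Iset :: "ereal \<Rightarrow> real set" where
  "Iset \<gamma> = {t. 0 \<le> t \<and> ereal t < \<gamma>}"

definition extE :: "(real \<Rightarrow> real) \<Rightarrow> ennreal \<Rightarrow> ennreal" where
  "extE \<psi> x = (if x = \<infinity> then \<infinity> else ennreal (\<psi> (enn2real x)))"

definition Orlicz_fun :: "(real \<Rightarrow> real) \<Rightarrow> bool" where
  "Orlicz_fun \<phi> \<longleftrightarrow> convex_on {0..} \<phi> \<and> \<phi> 0 = 0 \<and> (\<forall>u>0. \<phi> u > 0)"

definition N_fun :: "(real \<Rightarrow> real) \<Rightarrow> bool" where
  "N_fun \<phi> \<longleftrightarrow> Orlicz_fun \<phi> \<and> ((\<lambda>u. \<phi> u / u) \<longlongrightarrow> 0) (at_right 0)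
      \<and> filterlim (\<lambda>u. \<phi> u / u) at_top at_top"

definition compl_fun :: "(real \<Rightarrow> real) \<Rightarrow> real \<Rightarrow> real" where
  "compl_fun \<phi> v = (SUP u\<in>{0<..}. u * v - \<phi> u)"

definition weight :: "ereal \<Rightarrow> (real \<Rightarrow> real) \<Rightarrow> bool" where
  "weight \<gamma> w \<longleftrightarrow> (\<forall>t\<in>Iset \<gamma>. 0 < w t)
     \<and> (\<forall>s\<in>Iset \<gamma>. \<forall>t\<in>Iset \<gamma>. s \<le> t \<longrightarrow> w t \<le> w s)
     \<and> (\<forall>b. 0 \<le> b \<and> ereal b < \<gamma> \<longrightarrow> set_integrable lborel {0..b} w)
     \<and> (\<gamma> = \<infinity> \<longrightarrow> (\<integral>\<^sup>+ t\<in>Iset \<gamma>. ennreal (w t) \<partial>lborel) = \<infinity>)"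

text \<open>Decreasing rearrangement (of a [0,\<infinity>]-valued function; for a real f use |f|):
  F*(t) = inf { s : m{x\<in>I. F x > s} \<le> t }.\<close>
definition rearr :: "ereal \<Rightarrow> (real \<Rightarrow> ennreal) \<Rightarrow> real \<Rightarrow> ennreal" where
  "rearr \<gamma> F t = Inf {s. emeasure (lebesgue_on (Iset \<gamma>)) {x\<in>Iset \<gamma>. s < F x} \<le> ennreal t}"

definition Gint :: "(real \<Rightarrow> ennreal) \<Rightarrow> real \<Rightarrow> real \<Rightarrow> ennreal" where
  "Gint g a b = (\<integral>\<^sup>+ x\<in>{a<..b}. g x \<partial>lborel)"

definition Wint :: "(real \<Rightarrow> real) \<Rightarrow> real \<Rightarrow> real \<Rightarrow> ennreal" where
  "Wint w a b = (\<integral>\<^sup>+ x\<in>{a<..b}. ennreal (w x) \<partial>lborel)"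

definition level_interval ::
  "ereal \<Rightarrow> (real \<Rightarrow> real) \<Rightarrow> (real \<Rightarrow> ennreal) \<Rightarrow> real \<Rightarrow> real \<Rightarrow> bool" where
  "level_interval \<gamma> w g a b \<longleftrightarrow> 0 \<le> a \<and> a < b \<and> ereal b \<le> \<gamma> \<and>
     (\<forall>t. a < t \<and> t \<le> b \<longrightarrow> Gint g a t / Wint w a t \<le> Gint g a b / Wint w a b)"

definition max_level_interval ::
  "ereal \<Rightarrow> (real \<Rightarrow> real) \<Rightarrow> (real \<Rightarrow> ennreal) \<Rightarrow> real \<Rightarrow> real \<Rightarrow> bool" where
  "max_level_interval \<gamma> w g a b \<longleftrightarrow> level_interval \<gamma> w g a b \<and>
     \<not> (\<exists>c d. level_interval \<gamma> w g c d \<and> {a<..b} \<subset> {c<..d})"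

definition level_fun :: "ereal \<Rightarrow> (real \<Rightarrow> real) \<Rightarrow> (real \<Rightarrow> ennreal) \<Rightarrow> real \<Rightarrow> ennreal" where
  "level_fun \<gamma> w g t =
     (if \<exists>a b. max_level_interval \<gamma> w g a b \<and> t \<in> {a<..b}
      then (let (a, b) = (SOME (a, b). max_level_interval \<gamma> w g a b \<and> t \<in> {a<..b})
            in Gint g a b / Wint w a b * ennreal (w t))
      else g t)"

definition rho_OL :: "(real \<Rightarrow> real) \<Rightarrow> ereal \<Rightarrow> (real \<Rightarrow> real) \<Rightarrow> (real \<Rightarrow> ennreal) \<Rightarrow> ennreal" where
  "rho_OL \<psi> \<gamma> w g = (\<integral>\<^sup>+ t\<in>Iset \<gamma>. extE \<psi> (rearr \<gamma> g t) * ennreal (w t) \<partial>lborel)"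

definition fstar0 :: "ereal \<Rightarrow> (real \<Rightarrow> real) \<Rightarrow> (real \<Rightarrow> real) \<Rightarrow> real \<Rightarrow> ennreal" where
  "fstar0 \<gamma> w f = level_fun \<gamma> w (rearr \<gamma> (\<lambda>x. ennreal \<bar>f x\<bar>))"

definition Q_fun :: "(real \<Rightarrow> real) \<Rightarrow> ereal \<Rightarrow> (real \<Rightarrow> real) \<Rightarrow> (real \<Rightarrow> real) \<Rightarrow> ennreal" where
  "Q_fun \<phi> \<gamma> w f = (\<integral>\<^sup>+ t\<in>Iset \<gamma>. extE \<phi> (fstar0 \<gamma> w f t / ennreal (w t)) * ennreal (w t) \<partial>lborel)"

definition M_space :: "(real \<Rightarrow> real) \<Rightarrow> ereal \<Rightarrow> (real \<Rightarrow> real) \<Rightarrow> (real \<Rightarrow> real) set" where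
  "M_space \<phi> \<gamma> w = {f. f \<in> borel_measurable (lebesgue_on (Iset \<gamma>)) \<and>
      (\<exists>k>0. Q_fun \<phi> \<gamma> w (\<lambda>x. k * f x) < \<infinity>)}"

end

theory Submission
  imports Defs
begin

text \<open>
  Since \<open>f\<close> is not a.e. zero, \<open>f\<^sup>* \<ge> c > 0\<close> on an initial interval \<open>[0, t\<^sub>0]\<close>.
  Averages of \<open>f\<^sup>*\<close> over level intervals inherit this bound, so \<open>(f\<^sup>*)\<^sup>0/w \<ge> c/w(0)\<close> on
  \<open>(0, t\<^sub>0]\<close>, and the rearrangement of \<open>p(k(f\<^sup>*)\<^sup>0/w)\<close> is at least \<open>p(kc/w(0))\<close> on
  \<open>[0, t\<^sub>0)\<close>. Young's inequality \<open>\<phi>\<^sub>*(v) \<ge> v - \<phi>(1)\<close> turns this into the lower bound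
  \<open>(p(kc/w(0)) - \<phi>(1)) w(t\<^sub>0) t\<^sub>0\<close> for the modular, which exceeds 1 for large \<open>k\<close> because
  \<open>p(u) \<ge> \<phi>(u)/u \<rightarrow> \<infinity>\<close>.

  The rearrangement only sees measurable superlevel sets, so \<open>(f\<^sup>*)\<^sup>0/w\<close> must be shown
  measurable: two overlapping level intervals unite to a level interval, hence distinct maximal
  level intervals are disjoint and there are only countably many of them.
\<close>

lemma convex_on_right_deriv_slope:
  fixes \<phi> p :: "real \<Rightarrow> real"
  assumes cvx: "convex_on {0..} \<phi>"
    and der: "\<forall>u\<ge>0. ((\<lambda>h. (\<phi> (u + h) - \<phi> u) / h) \<longlongrightarrow> p u) (at_right 0)"
    and xy: "0 \<le> x" "x < y"
  shows "p x \<le> (\<phi> y - \<phi> x) / (y - x)" and "(\<phi> y - \<phi> x) / (y - x) \<le> p y"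
proof -
  have slope_sym: "(\<phi> x - \<phi> y) / (x - y) = (\<phi> y - \<phi> x) / (y - x)"
    by (metis minus_diff_eq minus_divide_divide)
  have "eventually (\<lambda>h. h \<in> {0<..<y - x}) (at_right (0::real))"
    using eventually_at_right_real[of 0 "y - x"] xy by simp
  then have "eventually (\<lambda>h. (\<phi> (x + h) - \<phi> x) / h \<le> (\<phi> y - \<phi> x) / (y - x)) (at_right 0)"
  proof (rule eventually_mono)
    fix h assume h: "h \<in> {0<..<y - x}"
    have "(\<phi> x - \<phi> (x + h)) / (x - (x + h)) \<le> (\<phi> x - \<phi> y) / (x - y)"
      using convex_on_slope_le(1)[OF cvx, of x y "x + h"] xy h by auto
    moreover have "(\<phi> x - \<phi> (x + h)) / (x - (x + h)) = (\<phi> (x + h) - \<phi> x) / h"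
      using h by (simp add: field_simps)
    ultimately show "(\<phi> (x + h) - \<phi> x) / h \<le> (\<phi> y - \<phi> x) / (y - x)"
      by (simp add: slope_sym)
  qed
  then show "p x \<le> (\<phi> y - \<phi> x) / (y - x)"
    using der xy by (intro tendsto_upperbound[of _ "p x" "at_right 0"]) auto
  have "eventually (\<lambda>h. (\<phi> y - \<phi> x) / (y - x) \<le> (\<phi> (y + h) - \<phi> y) / h) (at_right 0)"
  proof (rule eventually_mono[OF eventually_at_right_less])
    fix h :: real assume h: "0 < h"
    have "(\<phi> x - \<phi> y) / (x - y) \<le> (\<phi> x - \<phi> (y + h)) / (x - (y + h))"
      using convex_on_slope_le(1)[OF cvx, of x "y + h" y] xy h by auto
    also have "\<dots> \<le> (\<phi> y - \<phi> (y + h)) / (y - (y + h))"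
      using convex_on_slope_le(2)[OF cvx, of x "y + h" y] xy h by auto
    also have "\<dots> = (\<phi> (y + h) - \<phi> y) / h"
      using h by (simp add: field_simps)
    finally show "(\<phi> y - \<phi> x) / (y - x) \<le> (\<phi> (y + h) - \<phi> y) / h"
      by (simp add: slope_sym)
  qed
  then show "(\<phi> y - \<phi> x) / (y - x) \<le> p y"
    using der xy by (intro tendsto_lowerbound[of _ "p y" "at_right 0"]) auto
qed

lemma convex_on_right_deriv_mono:
  fixes \<phi> p :: "real \<Rightarrow> real"
  assumes "convex_on {0..} \<phi>"
    and "\<forall>u\<ge>0. ((\<lambda>h. (\<phi> (u + h) - \<phi> u) / h) \<longlongrightarrow> p u) (at_right 0)"
    and "0 \<le> x" "x \<le> y"
  shows "p x \<le> p y"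
  using convex_on_right_deriv_slope[OF assms(1,2), of x y] assms(3,4)
  by (cases "x = y") auto

lemma N_fun_ratio_le_right_deriv:
  fixes \<phi> p :: "real \<Rightarrow> real"
  assumes "N_fun \<phi>"
    and "\<forall>u\<ge>0. ((\<lambda>h. (\<phi> (u + h) - \<phi> u) / h) \<longlongrightarrow> p u) (at_right 0)"
    and "0 < u"
  shows "\<phi> u / u \<le> p u"
  using convex_on_right_deriv_slope(2)[of \<phi> p 0 u] assms
  by (simp add: N_fun_def Orlicz_fun_def)

lemma N_fun_ratio_eventually_ge:
  assumes "N_fun \<phi>"
  obtains U where "0 < U" "\<And>u. U \<le> u \<Longrightarrow> M \<le> \<phi> u / u"
proof -
  have "eventually (\<lambda>u. M \<le> \<phi> u / u) at_top"
    using assms by (simp add: N_fun_def filterlim_at_top)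
  then obtain N where "\<And>u. N \<le> u \<Longrightarrow> M \<le> \<phi> u / u"
    by (auto simp: eventually_at_top_linorder)
  then show thesis by (intro that[of "max N 1"]) auto
qed

lemma bdd_above_compl_fun:
  assumes "N_fun \<phi>" "0 \<le> y"
  shows "bdd_above ((\<lambda>u. u * y - \<phi> u) ` {0<..})"
proof -
  obtain U where U: "0 < U" "\<And>u. U \<le> u \<Longrightarrow> y + 1 \<le> \<phi> u / u"
    using N_fun_ratio_eventually_ge[OF assms(1)] by blast
  have pos: "0 < \<phi> u" if "0 < u" for u
    using assms(1) that by (simp add: N_fun_def Orlicz_fun_def)
  show ?thesis
  proof (rule bdd_aboveI2)
    fix u :: real assume u: "u \<in> {0<..}"
    show "u * y - \<phi> u \<le> U * y"
    proof (cases "U \<le> u")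
      case True
      then have "(y + 1) * u \<le> \<phi> u" using U by (simp add: pos_le_divide_eq)
      moreover have "0 \<le> U * y" using U(1) assms(2) by simp
      ultimately show ?thesis using u by (simp add: algebra_simps)
    next
      case False
      then have "u * y \<le> U * y" using assms(2) by (simp add: mult_right_mono)
      then show ?thesis using pos[of u] u by simp
    qed
  qed
qed

lemma compl_fun_ge:
  assumes "N_fun \<phi>" "0 \<le> y"
  shows "y - \<phi> 1 \<le> compl_fun \<phi> y"
  unfolding compl_fun_def
  using cSUP_upper[OF _ bdd_above_compl_fun[OF assms], of 1] by simp

lemma mono_extE:
  assumes "\<And>x y. 0 \<le> x \<Longrightarrow> x \<le> y \<Longrightarrow> p x \<le> p y"
  shows "mono (extE p)"
proof (rule monoI)
  fix x y :: ennreal assume "x \<le> y"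
  show "extE p x \<le> extE p y"
  proof (cases "y = \<infinity>")
    case False
    then have "x \<noteq> \<infinity>" and "enn2real x \<le> enn2real y"
      using \<open>x \<le> y\<close> by (auto simp: top_unique enn2real_mono less_top)
    then show ?thesis
      using False assms[of "enn2real x" "enn2real y"] by (simp add: extE_def ennreal_leI)
  qed (simp add: extE_def)
qed

lemma borel_measurable_mono_ennreal:
  fixes h :: "ennreal \<Rightarrow> ennreal"
  assumes "mono h"
  shows "h \<in> borel_measurable borel"
proof (rule borel_measurableI_greater)
  fix y
  define S where "S = {x. y < h x}"
  have up: "z \<in> S" if "x \<in> S" "x \<le> z" for x z
    using that monoD[OF assms] by (auto simp: S_def intro: order_less_le_trans)
  have "S = {Inf S..} \<or> S = {Inf S<..}"
  proof (cases "Inf S \<in> S")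
    case True
    then show ?thesis using up by (auto intro: Inf_lower)
  next
    case False
    have "S = {Inf S<..}"
    proof (intro set_eqI iffI)
      fix x assume "x \<in> S"
      then show "x \<in> {Inf S<..}" using False Inf_lower[of x S] by (cases "x = Inf S") auto
    next
      fix x assume "x \<in> {Inf S<..}"
      then obtain s where "s \<in> S" "s < x" by (auto simp: Inf_less_iff)
      then show "x \<in> S" using up by auto
    qed
    then show ?thesis ..
  qed
  then have "S \<in> sets borel" by (metis borel_closed borel_open closed_atLeast open_greaterThan)
  then show "{x \<in> space borel. y < h x} \<in> sets borel"
    by (simp add: S_def)
qed

lemma ennreal_le_divideI:
  fixes a b c :: ennreal
  assumes "a * b \<le> c" "b \<noteq> 0" "b \<noteq> \<infinity>"
  shows "a \<le> c / b"
proof -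
  have "a = a * b / b" using assms(2,3) by (simp add: mult_divide_eq_ennreal)
  also have "\<dots> \<le> c / b" using assms(1) by (rule divide_right_mono_ennreal)
  finally show ?thesis .
qed

lemma nn_integral_Ioc_split:
  fixes h :: "real \<Rightarrow> ennreal"
  assumes "h \<in> borel_measurable borel" "x \<le> y" "y \<le> z"
  shows "(\<integral>\<^sup>+ t\<in>{x<..z}. h t \<partial>lborel)
      = (\<integral>\<^sup>+ t\<in>{x<..y}. h t \<partial>lborel) + (\<integral>\<^sup>+ t\<in>{y<..z}. h t \<partial>lborel)"
proof -
  have "{x<..z} = {x<..y} \<union> {y<..z}" using assms(2,3) by auto
  then show ?thesis using assms(1) by (simp add: nn_integral_disjoint_pair)
qed

lemma zero_in_Iset: "0 < \<gamma> \<Longrightarrow> 0 \<in> Iset \<gamma>"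
  by (simp add: Iset_def zero_ereal_def)

lemma Iset_downward_closed: "0 \<le> s \<Longrightarrow> s \<le> t \<Longrightarrow> t \<in> Iset \<gamma> \<Longrightarrow> s \<in> Iset \<gamma>"
  by (auto simp: Iset_def) (meson ereal_less_eq(3) order_le_less_trans)

lemma Iset_borel: "Iset \<gamma> \<in> sets borel"
proof -
  have "is_interval (Iset \<gamma>)"
    unfolding is_interval_1 Iset_def
    by (auto, meson ereal_less_eq(3) order_le_less_trans)
  then show ?thesis by (rule real_interval_borel_measurable)
qed

lemma Iset_exists_below:
  assumes "0 < \<gamma>" "0 < m"
  obtains t where "0 < t" "t \<in> Iset \<gamma>" "ennreal t < m"
proof -
  obtain z :: ennreal where z: "0 < z" "z < m" using dense[OF assms(2)] by blast
  obtain e :: ereal where e: "0 < e" "e < \<gamma>" using dense[OF assms(1)] by blast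
  obtain r where r: "0 < r" "ennreal r < m"
    using z by (cases z rule: ennreal_cases) auto
  obtain s where s: "0 < s" "ereal s < \<gamma>"
    using e by (cases e) auto
  show thesis
  proof (rule that[of "min r s"])
    have "ereal (min r s) \<le> ereal s" by simp
    then show "min r s \<in> Iset \<gamma>"
      using s r by (auto simp: Iset_def intro: min.strict_coboundedI2)
    show "ennreal (min r s) < m"
      using r by (meson ennreal_leI min.cobounded1 order_le_less_trans)
  qed (use r s in auto)
qed

lemma pos_measure_level_set:
  fixes f :: "'a \<Rightarrow> real"
  assumes f: "f \<in> borel_measurable M" and nonzero: "\<not> (AE x in M. f x = 0)"
  obtains c where "0 < c" "0 < emeasure M {x \<in> space M. c < \<bar>f x\<bar>}"
proof -
  define A where "A n = {x \<in> space M. inverse (real (Suc n)) < \<bar>f x\<bar>}" for n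
  have A_sets: "A n \<in> sets M" for n
    using f unfolding A_def by measurable
  have "{x \<in> space M. f x \<noteq> 0} = (\<Union>n. A n)"
  proof (intro set_eqI iffI)
    fix x assume x: "x \<in> {x \<in> space M. f x \<noteq> 0}"
    then obtain n where "inverse (real (Suc n)) < \<bar>f x\<bar>"
      using reals_Archimedean[of "\<bar>f x\<bar>"] by auto
    then show "x \<in> (\<Union>n. A n)" using x by (auto simp: A_def)
  qed (auto simp: A_def)
  moreover have "emeasure M {x \<in> space M. f x \<noteq> 0} \<noteq> 0"
    using nonzero AE_iff_measurable[of "{x \<in> space M. f x \<noteq> 0}" M "\<lambda>x. f x = 0"] f by auto
  ultimately obtain n where "emeasure M (A n) \<noteq> 0"
    using emeasure_UN_eq_0[of M A] A_sets by auto
  then show thesis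
    by (intro that[of "inverse (real (Suc n))"]) (auto simp: A_def zero_less_iff_neq_zero)
qed

lemma rearr_antimono: "s \<le> t \<Longrightarrow> rearr \<gamma> F t \<le> rearr \<gamma> F s"
  unfolding rearr_def by (rule Inf_superset_mono) (auto intro: order_trans ennreal_leI)

lemma rearr_borel_measurable: "rearr \<gamma> F \<in> borel_measurable borel"
proof (rule borel_measurableI_greater)
  fix y
  have "is_interval {x. y < rearr \<gamma> F x}"
    unfolding is_interval_1 using rearr_antimono by (blast intro: order_less_le_trans)
  then show "{x \<in> space borel. y < rearr \<gamma> F x} \<in> sets borel"
    by (simp add: real_interval_borel_measurable)
qed

lemma rearr_ge:
  assumes F: "F \<in> borel_measurable (lebesgue_on (Iset \<gamma>))"
    and A: "A \<in> sets (lebesgue_on (Iset \<gamma>))" "ennreal t < emeasure (lebesgue_on (Iset \<gamma>)) A"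
    and ge: "\<And>x. x \<in> A \<Longrightarrow> c \<le> F x"
  shows "c \<le> rearr \<gamma> F t"
  unfolding rearr_def
proof (rule Inf_greatest)
  fix s assume "s \<in> {s. emeasure (lebesgue_on (Iset \<gamma>)) {x \<in> Iset \<gamma>. s < F x} \<le> ennreal t}"
  then have s: "emeasure (lebesgue_on (Iset \<gamma>)) {x \<in> Iset \<gamma>. s < F x} \<le> ennreal t" by simp
  show "c \<le> s"
  proof (rule ccontr)
    assume "\<not> c \<le> s"
    then have "s < c" by simp
    moreover have "A \<subseteq> Iset \<gamma>" using sets.sets_into_space[OF A(1)] by simp
    ultimately have "A \<subseteq> {x \<in> Iset \<gamma>. s < F x}" using ge by (auto intro: less_le_trans)
    moreover have "{x \<in> space (lebesgue_on (Iset \<gamma>)). s < F x} \<in> sets (lebesgue_on (Iset \<gamma>))"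
      using F by measurable
    ultimately have "emeasure (lebesgue_on (Iset \<gamma>)) A
        \<le> emeasure (lebesgue_on (Iset \<gamma>)) {x \<in> Iset \<gamma>. s < F x}"
      by (intro emeasure_mono) auto
    with s A(2) show False by simp
  qed
qed

lemma rearr_ge_initial:
  assumes "F \<in> borel_measurable (lebesgue_on (Iset \<gamma>))" "t0 \<in> Iset \<gamma>" "0 \<le> t" "t < t0"
    and "\<And>x. 0 < x \<Longrightarrow> x \<le> t0 \<Longrightarrow> c \<le> F x"
  shows "c \<le> rearr \<gamma> F t"
proof (rule rearr_ge[OF assms(1)])
  have sub: "{0<..t0} \<subseteq> Iset \<gamma>"
    using Iset_downward_closed assms(2) by auto
  have I: "Iset \<gamma> \<inter> space lebesgue \<in> sets lebesgue"
    using Iset_borel by simp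
  show "{0<..t0} \<in> sets (lebesgue_on (Iset \<gamma>))"
    using sub by (simp add: sets_restrict_space_iff[OF I])
  have "emeasure (lebesgue_on (Iset \<gamma>)) {0<..t0} = ennreal t0"
    using emeasure_restrict_space[OF I sub] assms(2) by (simp add: Iset_def)
  then show "ennreal t < emeasure (lebesgue_on (Iset \<gamma>)) {0<..t0}"
    using assms(3,4) by (simp add: ennreal_lessI)
qed (use assms(5) in auto)

lemma rearr_abs_lower_bound:
  assumes "f \<in> borel_measurable (lebesgue_on (Iset \<gamma>))" "0 < \<gamma>"
    and "\<not> (AE t in lebesgue_on (Iset \<gamma>). f t = 0)"
  obtains c t0 where "0 < c" "0 < t0" "t0 \<in> Iset \<gamma>"
    "\<And>t. t \<le> t0 \<Longrightarrow> ennreal c \<le> rearr \<gamma> (\<lambda>x. ennreal \<bar>f x\<bar>) t"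
proof -
  let ?M = "lebesgue_on (Iset \<gamma>)"
  obtain c where c: "0 < c" "0 < emeasure ?M {x \<in> space ?M. c < \<bar>f x\<bar>}"
    using pos_measure_level_set[OF assms(1,3)] .
  obtain t0 where t0: "0 < t0" "t0 \<in> Iset \<gamma>" "ennreal t0 < emeasure ?M {x \<in> space ?M. c < \<bar>f x\<bar>}"
    using Iset_exists_below[OF assms(2) c(2)] .
  have "ennreal c \<le> rearr \<gamma> (\<lambda>x. ennreal \<bar>f x\<bar>) t0"
  proof (rule rearr_ge)
    show "{x \<in> space ?M. c < \<bar>f x\<bar>} \<in> sets ?M"
      using assms(1) by measurable
  qed (use assms(1) t0(3) in \<open>auto simp: ennreal_leI\<close>)
  then show thesis
    using rearr_antimono by (intro that[OF c(1) t0(1,2)]) (blast intro: order_trans)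
qed

lemma Ioc_psubset_Ioc:
  fixes a b c d :: real
  assumes "a \<le> c" "d \<le> b" "c < d" "a \<noteq> c \<or> b \<noteq> d"
  shows "{c<..d} \<subset> {a<..b}"
proof -
  have "{c<..d} \<subseteq> {a<..b}" using assms(1,2) by auto
  moreover have "c \<in> {a<..b} - {c<..d} \<or> b \<in> {a<..b} - {c<..d}" using assms by auto
  ultimately show ?thesis by blast
qed

lemma weight_pos: "weight \<gamma> w \<Longrightarrow> t \<in> Iset \<gamma> \<Longrightarrow> 0 < w t"
  by (simp add: weight_def)

lemma weight_antimono: "weight \<gamma> w \<Longrightarrow> s \<in> Iset \<gamma> \<Longrightarrow> t \<in> Iset \<gamma> \<Longrightarrow> s \<le> t \<Longrightarrow> w t \<le> w s"
  by (simp add: weight_def)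

lemma mediant_le_iff:
  fixes x y X Y :: real
  assumes "0 < X" "0 < Y"
  shows "x / X \<le> (x + y) / (X + Y) \<longleftrightarrow> x / X \<le> y / Y"
    and "(x + y) / (X + Y) \<le> y / Y \<longleftrightarrow> x / X \<le> y / Y"
  using assms by (simp_all add: field_simps)

lemma additive_ratio_level_union:
  fixes G W :: "real \<Rightarrow> real \<Rightarrow> real"
  assumes G_add: "\<And>x y z. a \<le> x \<Longrightarrow> x \<le> y \<Longrightarrow> y \<le> z \<Longrightarrow> z \<le> d \<Longrightarrow> G x z = G x y + G y z"
    and W_add: "\<And>x y z. a \<le> x \<Longrightarrow> x \<le> y \<Longrightarrow> y \<le> z \<Longrightarrow> z \<le> d \<Longrightarrow> W x z = W x y + W y z"
    and W_pos: "\<And>x y. a \<le> x \<Longrightarrow> x < y \<Longrightarrow> y \<le> d \<Longrightarrow> 0 < W x y"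
    and order: "a < c" "c < b" "b < d"
    and level_ab: "\<And>t. a < t \<Longrightarrow> t \<le> b \<Longrightarrow> G a t / W a t \<le> G a b / W a b"
    and level_cd: "\<And>t. c < t \<Longrightarrow> t \<le> d \<Longrightarrow> G c t / W c t \<le> G c d / W c d"
    and t: "a < t" "t \<le> d"
  shows "G a t / W a t \<le> G a d / W a d"
proof -
  define R where "R x y = G x y / W x y" for x y
  have mediant: "(R x y \<le> R x z \<longleftrightarrow> R x y \<le> R y z) \<and> (R x z \<le> R y z \<longleftrightarrow> R x y \<le> R y z)"
    if "a \<le> x" "x < y" "y < z" "z \<le> d" for x y z
  proof -
    have "0 < W x y" "0 < W y z" using W_pos that by auto
    moreover have "G x z = G x y + G y z" "W x z = W x y + W y z"
      using G_add W_add that by auto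
    ultimately show ?thesis
      unfolding R_def using mediant_le_iff[of "W x y" "W y z" "G x y" "G y z"] by auto
  qed
  have ac_ab: "R a c \<le> R a b" using level_ab[of c] order unfolding R_def by auto
  then have ac_cb: "R a c \<le> R c b" and ab_cb: "R a b \<le> R c b"
    using mediant[of a c b] order by auto
  have cb_cd: "R c b \<le> R c d" using level_cd[of b] order unfolding R_def by auto
  then have cb_bd: "R c b \<le> R b d" and cd_bd: "R c d \<le> R b d"
    using mediant[of c b d] order by auto
  show ?thesis
  proof (cases "t \<le> b")
    case True
    have "R a b \<le> R b d" using ab_cb cb_bd by linarith
    then have "R a b \<le> R a d" using mediant[of a b d] order by auto
    then show ?thesis using level_ab[of t] True t unfolding R_def by linarith
  next
    case False
    show ?thesis
    proof (cases "t = d")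
      case False
      with \<open>\<not> t \<le> b\<close> t have bt: "b < t" "t < d" by auto
      have "R c t \<le> R c d" using level_cd[of t] bt order unfolding R_def by auto
      then have "R c d \<le> R t d" using mediant[of c t d] bt order by auto
      moreover have "R a c \<le> R c d" using ac_cb cb_cd by linarith
      then have "R a d \<le> R c d" using mediant[of a c d] order by auto
      ultimately have "R a d \<le> R t d" by linarith
      then show ?thesis using mediant[of a t d] bt order unfolding R_def by auto
    qed simp
  qed
qed

locale level_setting =
  fixes \<gamma> :: ereal and w :: "real \<Rightarrow> real" and g :: "real \<Rightarrow> ennreal"
  assumes gamma_pos: "0 < \<gamma>" and weight: "weight \<gamma> w" and g_borel: "g \<in> borel_measurable borel"
begin

text \<open>\<open>w\<close> is only controlled on \<open>I\<close>; this extension turns \<open>Wint w\<close> into the integral of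
  a Borel function without changing it on subintervals of \<open>I\<close>.\<close>
definition w_ext :: "real \<Rightarrow> real" where
  "w_ext t = (if t < 0 then w 0 else if ereal t < \<gamma> then w t else 0)"

lemma w_pos: "t \<in> Iset \<gamma> \<Longrightarrow> 0 < w t"
  using weight_pos[OF weight] .

lemma w_le_w0:
  assumes "t \<in> Iset \<gamma>"
  shows "w t \<le> w 0"
  using weight_antimono[OF weight zero_in_Iset[OF gamma_pos] assms] assms by (simp add: Iset_def)

lemma w_ext_eq: "t \<in> Iset \<gamma> \<Longrightarrow> w_ext t = w t"
  by (simp add: w_ext_def Iset_def)

lemma w_ext_nonneg: "0 \<le> w_ext t"
proof -
  have "0 < w t" if "0 \<le> t" "ereal t < \<gamma>" using w_pos that by (simp add: Iset_def)
  moreover have "0 < w 0" using w_pos zero_in_Iset[OF gamma_pos] by blast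
  ultimately show ?thesis by (simp add: w_ext_def not_less less_imp_le)
qed

lemma w_ext_le_w0: "w_ext t \<le> w 0"
  using w_le_w0[of t] w_pos[OF zero_in_Iset[OF gamma_pos]] by (simp add: w_ext_def Iset_def)

lemma w_ext_antimono:
  assumes st: "s \<le> t"
  shows "w_ext t \<le> w_ext s"
proof -
  consider "t \<notin> Iset \<gamma>" "0 \<le> t" | "s < 0" | "0 \<le> s" "t \<in> Iset \<gamma>"
    by (meson not_less st order_trans)
  then show ?thesis
  proof cases
    case 1
    then show ?thesis using w_ext_nonneg[of s] by (simp add: w_ext_def Iset_def)
  next
    case 2
    then show ?thesis using w_ext_le_w0[of t] by (simp add: w_ext_def)
  next
    case 3
    then have "s \<in> Iset \<gamma>" using Iset_downward_closed st by blast
    then show ?thesis using 3 st weight_antimono[OF weight] by (simp add: w_ext_eq)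
  qed
qed

lemma w_ext_borel: "w_ext \<in> borel_measurable borel"
proof -
  have "mono (\<lambda>t. - w_ext t)" by (auto simp: mono_def intro: w_ext_antimono)
  then have "(\<lambda>t. - w_ext t) \<in> borel_measurable borel" by (rule borel_measurable_mono)
  then have "(\<lambda>t. - (- w_ext t)) \<in> borel_measurable borel" by measurable
  then show ?thesis by simp
qed

lemma Wint_eq_w_ext:
  assumes "0 \<le> a" "ereal b \<le> \<gamma>"
  shows "Wint w a b = (\<integral>\<^sup>+ x\<in>{a<..b}. ennreal (w_ext x) \<partial>lborel)"
  unfolding Wint_def
proof (rule nn_integral_cong_AE)
  have eq: "ennreal (w x) * indicator {a<..b} x = ennreal (w_ext x) * indicator {a<..b} x"
    if "x \<noteq> b" for x
  proof (cases "x \<in> {a<..b}")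
    case True
    then have "ereal x < ereal b" using that by simp
    then have "ereal x < \<gamma>" using assms(2) by (rule order_less_le_trans)
    then show ?thesis using True assms(1) by (simp add: w_ext_eq Iset_def)
  qed simp
  show "AE x in lborel. ennreal (w x) * indicator {a<..b} x = ennreal (w_ext x) * indicator {a<..b} x"
    by (rule AE_mp[OF AE_lborel_singleton[of b]]) (intro AE_I2 impI eq)
qed

lemma Wint_split:
  assumes "0 \<le> x" "x \<le> y" "y \<le> z" "ereal z \<le> \<gamma>"
  shows "Wint w x z = Wint w x y + Wint w y z"
proof -
  have "ereal y \<le> \<gamma>" using assms by (meson ereal_less_eq(3) order_trans)
  then have "Wint w x z = (\<integral>\<^sup>+ t\<in>{x<..z}. ennreal (w_ext t) \<partial>lborel)"
    and "Wint w x y = (\<integral>\<^sup>+ t\<in>{x<..y}. ennreal (w_ext t) \<partial>lborel)"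
    and "Wint w y z = (\<integral>\<^sup>+ t\<in>{y<..z}. ennreal (w_ext t) \<partial>lborel)"
    using assms by (auto intro: Wint_eq_w_ext)
  then show ?thesis
    using nn_integral_Ioc_split[of "\<lambda>t. ennreal (w_ext t)" x y z] assms w_ext_borel by simp
qed

lemma Gint_split: "x \<le> y \<Longrightarrow> y \<le> z \<Longrightarrow> Gint g x z = Gint g x y + Gint g y z"
  unfolding Gint_def by (rule nn_integral_Ioc_split[OF g_borel])

lemma Wint_le:
  assumes ab: "0 \<le> a" "a \<le> b" "ereal b \<le> \<gamma>"
  shows "Wint w a b \<le> ennreal (w 0 * (b - a))"
proof -
  have "Wint w a b \<le> (\<integral>\<^sup>+ x. ennreal (w 0) * indicator {a<..b} x \<partial>lborel)"
    unfolding Wint_eq_w_ext[OF ab(1,3)]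
    by (intro nn_integral_mono) (auto simp: indicator_def ennreal_leI w_ext_le_w0)
  also have "\<dots> = ennreal (w 0 * (b - a))"
    using ab w_pos[OF zero_in_Iset[OF gamma_pos]]
    by (simp add: nn_integral_cmult_indicator ennreal_mult)
  finally show ?thesis .
qed

lemma Wint_finite:
  assumes "0 \<le> a" "ereal b \<le> \<gamma>"
  shows "Wint w a b < \<infinity>"
proof (cases "a \<le> b")
  case True
  show ?thesis
    unfolding infinity_ennreal_def by (rule le_less_trans[OF Wint_le[OF assms(1) True assms(2)] ennreal_less_top])
qed (simp add: Wint_def)

lemma Wint_pos:
  assumes "0 \<le> a" "a < b" "ereal b \<le> \<gamma>"
  shows "0 < Wint w a b"
proof -
  define m where "m = (a + b) / 2"
  have m: "a < m" "m < b" using assms by (auto simp: m_def)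
  then have "ereal m < ereal b" by simp
  then have "ereal m < \<gamma>" using assms(3) by (rule order_less_le_trans)
  then have m_I: "m \<in> Iset \<gamma>" using m assms by (simp add: Iset_def)
  have "(\<integral>\<^sup>+ x. ennreal (w m) * indicator {a<..m} x \<partial>lborel) \<le> Wint w a b"
    unfolding Wint_eq_w_ext[OF assms(1,3)]
    using w_ext_antimono[of _ m] w_ext_eq[OF m_I] m
    by (intro nn_integral_mono) (auto simp: indicator_def ennreal_leI)
  moreover have "0 < (\<integral>\<^sup>+ x. ennreal (w m) * indicator {a<..m} x \<partial>lborel)"
    using m w_pos[OF m_I] by (simp add: nn_integral_cmult_indicator ennreal_zero_less_mult_iff)
  ultimately show ?thesis by simp
qed

lemma Gint_subinterval_le: "a \<le> x \<Longrightarrow> y \<le> b \<Longrightarrow> Gint g x y \<le> Gint g a b"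
  unfolding Gint_def by (intro nn_integral_mono) (auto simp: indicator_def)

lemma enn2real_Gint_split:
  assumes "Gint g x z < \<infinity>" "x \<le> y" "y \<le> z"
  shows "enn2real (Gint g x z) = enn2real (Gint g x y) + enn2real (Gint g y z)"
  using assms Gint_split[OF assms(2,3)] by (simp add: enn2real_plus less_top[symmetric])

lemma enn2real_Wint_split:
  assumes "0 \<le> x" "x \<le> y" "y \<le> z" "ereal z \<le> \<gamma>"
  shows "enn2real (Wint w x z) = enn2real (Wint w x y) + enn2real (Wint w y z)"
proof -
  have "ereal y \<le> \<gamma>" using assms by (meson ereal_less_eq(3) order_trans)
  then have "Wint w x y < \<infinity>" "Wint w y z < \<infinity>"
    using Wint_finite[of x y] Wint_finite[of y z] assms by auto
  then show ?thesis using Wint_split[OF assms] by (simp add: enn2real_plus)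
qed

lemma Wint_real_pos: "0 \<le> x \<Longrightarrow> x < y \<Longrightarrow> ereal y \<le> \<gamma> \<Longrightarrow> 0 < enn2real (Wint w x y)"
  using Wint_pos Wint_finite by (simp add: enn2real_positive_iff)

lemma Gint_div_Wint_real:
  assumes "0 \<le> x" "x < y" "ereal y \<le> \<gamma>" "Gint g x y < \<infinity>"
  shows "Gint g x y / Wint w x y = ennreal (enn2real (Gint g x y) / enn2real (Wint w x y))"
proof -
  have "ennreal (enn2real (Gint g x y)) / ennreal (enn2real (Wint w x y))
      = ennreal (enn2real (Gint g x y) / enn2real (Wint w x y))"
    using Wint_real_pos[OF assms(1-3)] by (intro divide_ennreal) simp_all
  then show ?thesis using assms(4) Wint_finite[OF assms(1,3)] by simp
qed

lemma level_interval_real: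
  assumes level: "level_interval \<gamma> w g u v" and fin: "Gint g u v < \<infinity>" and s: "u < s" "s \<le> v"
  shows "enn2real (Gint g u s) / enn2real (Wint w u s) \<le> enn2real (Gint g u v) / enn2real (Wint w u v)"
proof -
  have u: "0 \<le> u" and v: "ereal v \<le> \<gamma>" using level by (simp_all add: level_interval_def)
  have s_le: "ereal s \<le> \<gamma>" using s(2) v by (meson ereal_less_eq(3) order_trans)
  have fin_s: "Gint g u s < \<infinity>"
    using Gint_subinterval_le[of u u s v] s(2) fin by (simp add: order_le_less_trans)
  have "Gint g u s / Wint w u s \<le> Gint g u v / Wint w u v"
    using level s by (simp add: level_interval_def)
  then show ?thesis
    using Gint_div_Wint_real[OF u s(1) s_le fin_s] Gint_div_Wint_real[OF u _ v fin] s
    by (simp add: ennreal_le_iff)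
qed

lemma level_interval_union:
  assumes ab: "level_interval \<gamma> w g a b" and cd: "level_interval \<gamma> w g c d"
    and order: "a < c" "c < b" "b < d"
  shows "level_interval \<gamma> w g a d"
proof -
  have a: "0 \<le> a" using ab by (simp add: level_interval_def)
  have d: "ereal d \<le> \<gamma>" using cd by (simp add: level_interval_def)
  have below_d: "ereal y \<le> \<gamma>" if "y \<le> d" for y
    using that d by (meson ereal_less_eq(3) order_trans)
  have "Gint g a t / Wint w a t \<le> Gint g a d / Wint w a d" if t: "a < t" "t \<le> d" for t
  proof (cases "Gint g a d = \<infinity>")
    case True
    then have "Gint g a d / Wint w a d = \<infinity>" using Wint_finite[OF a d] by (simp add: ennreal_top_divide)
    then show ?thesis by simp
  next
    case False
    have fin: "Gint g x y < \<infinity>" if "a \<le> x" "y \<le> d" for x y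
      using Gint_subinterval_le[OF that] False by (auto simp: less_top[symmetric] top_unique)
    let ?G = "\<lambda>x y. enn2real (Gint g x y)" and ?W = "\<lambda>x y. enn2real (Wint w x y)"
    have "?G a t / ?W a t \<le> ?G a d / ?W a d"
    proof (rule additive_ratio_level_union[of a d ?G ?W c b])
      fix x y z assume xyz: "a \<le> x" "x \<le> y" "y \<le> z" "z \<le> d"
      show "?G x z = ?G x y + ?G y z"
        by (rule enn2real_Gint_split[OF fin]) (use xyz in auto)
      show "?W x z = ?W x y + ?W y z"
        by (rule enn2real_Wint_split) (use xyz a below_d in auto)
    next
      fix x y assume "a \<le> x" "x < y" "y \<le> d"
      then show "0 < ?W x y" using Wint_real_pos a below_d by auto
    next
      fix s assume "a < s" "s \<le> b"
      then show "?G a s / ?W a s \<le> ?G a b / ?W a b"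
        using level_interval_real[OF ab fin] order by auto
    next
      fix s assume "c < s" "s \<le> d"
      then show "?G c s / ?W c s \<le> ?G c d / ?W c d"
        using level_interval_real[OF cd fin] order by auto
    qed (use order t in auto)
    then show ?thesis
      using Gint_div_Wint_real[OF a t(1) below_d[OF t(2)] fin[of a t]]
        Gint_div_Wint_real[OF a _ d fin[of a d]] t
      by (simp add: ennreal_leI)
  qed
  then show ?thesis using a order d by (simp add: level_interval_def)
qed

lemma max_level_interval_unique_ordered:
  assumes ab: "max_level_interval \<gamma> w g a b" and cd: "max_level_interval \<gamma> w g c d"
    and t: "t \<in> {a<..b}" "t \<in> {c<..d}" and "a \<le> c"
  shows "a = c \<and> b = d"
proof (rule ccontr)
  assume ne: "\<not> (a = c \<and> b = d)"
  have level: "level_interval \<gamma> w g a b" "level_interval \<gamma> w g c d"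
    using ab cd by (simp_all add: max_level_interval_def)
  have "a < b" "c < d" "c < b" using t \<open>a \<le> c\<close> by auto
  consider "{c<..d} \<subset> {a<..b}" | "{a<..b} \<subset> {c<..d}" | "a < c" "b < d"
  proof (cases "d \<le> b")
    case True
    then have "{c<..d} \<subset> {a<..b}"
      using Ioc_psubset_Ioc[of a c d b] ne \<open>a \<le> c\<close> \<open>c < d\<close> by blast
    then show ?thesis by (rule that)
  next
    case False
    show ?thesis
    proof (cases "a = c")
      case True
      then have "{a<..b} \<subset> {c<..d}" using Ioc_psubset_Ioc[of c a b d] \<open>a < b\<close> False by auto
      then show ?thesis by (rule that)
    qed (use False \<open>a \<le> c\<close> that(3) in auto)
  qed
  then show False
  proof cases
    case 3
    then have "level_interval \<gamma> w g a d" using level_interval_union level \<open>c < b\<close> by blast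
    moreover have "{a<..b} \<subset> {a<..d}"
      by (rule Ioc_psubset_Ioc) (use 3 \<open>a < b\<close> in auto)
    ultimately show False using ab unfolding max_level_interval_def by blast
  next
    case 1
    then show False using cd level(1) unfolding max_level_interval_def by blast
  next
    case 2
    then show False using ab level(2) unfolding max_level_interval_def by blast
  qed
qed

lemma max_level_interval_unique:
  assumes "max_level_interval \<gamma> w g a b" "max_level_interval \<gamma> w g c d"
    and "t \<in> {a<..b}" "t \<in> {c<..d}"
  shows "a = c \<and> b = d"
proof (cases "a \<le> c")
  case True
  then show ?thesis using max_level_interval_unique_ordered[OF assms] by blast
next
  case False
  then show ?thesis using max_level_interval_unique_ordered[OF assms(2,1,4,3)] by simp
qed

lemma level_fun_on_max_level_interval:
  assumes ab: "max_level_interval \<gamma> w g a b" and t: "t \<in> {a<..b}"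
  shows "level_fun \<gamma> w g t = Gint g a b / Wint w a b * ennreal (w t)"
proof -
  let ?P = "\<lambda>(a, b). max_level_interval \<gamma> w g a b \<and> t \<in> {a<..b}"
  obtain a' b' where ab': "(SOME x. ?P x) = (a', b')" by (cases "SOME x. ?P x") auto
  have "?P (a, b)" using ab t by simp
  then have "?P (a', b')" unfolding ab'[symmetric] by (rule someI)
  then have "a' = a \<and> b' = b" using max_level_interval_unique[OF _ ab _ t] by auto
  then show ?thesis using ab' ab t unfolding level_fun_def by auto
qed

lemma level_fun_off_max_level_intervals:
  "\<not> (\<exists>a b. max_level_interval \<gamma> w g a b \<and> t \<in> {a<..b}) \<Longrightarrow> level_fun \<gamma> w g t = g t"
  unfolding level_fun_def by auto

lemma countable_max_level_intervals: "countable {(a, b). max_level_interval \<gamma> w g a b}"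
proof -
  let ?F = "{(a, b). max_level_interval \<gamma> w g a b}"
  define q where "q ab = (SOME r. r \<in> \<rat> \<and> fst ab < r \<and> r < snd ab)" for ab :: "real \<times> real"
  have q: "q ab \<in> \<rat> \<and> fst ab < q ab \<and> q ab < snd ab" if "ab \<in> ?F" for ab
  proof -
    have "fst ab < snd ab"
      using that by (cases ab) (simp add: max_level_interval_def level_interval_def)
    then have "\<exists>r. r \<in> \<rat> \<and> fst ab < r \<and> r < snd ab" using Rats_dense_in_real by blast
    then show ?thesis unfolding q_def by (rule someI_ex)
  qed
  have "inj_on q ?F"
  proof (rule inj_onI)
    fix ab cd assume ab: "ab \<in> ?F" and cd: "cd \<in> ?F" and "q ab = q cd"
    then have "q ab \<in> {fst ab<..snd ab}" "q ab \<in> {fst cd<..snd cd}"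
      using q[OF ab] q[OF cd] by auto
    then show "ab = cd"
      using max_level_interval_unique[of "fst ab" "snd ab" "fst cd" "snd cd"] ab cd
      by (auto simp: prod_eq_iff)
  qed
  moreover have "q ` ?F \<subseteq> \<rat>" using q by auto
  then have "countable (q ` ?F)" using countable_rat by (rule countable_subset)
  ultimately show ?thesis by (rule countable_image_inj_on[rotated])
qed

definition level_ratio :: "real \<Rightarrow> ennreal" where
  "level_ratio t = level_fun \<gamma> w g t / ennreal (w t)"

lemma level_ratio_on_max_level_interval:
  assumes "max_level_interval \<gamma> w g a b" "t \<in> {a<..b}" "t \<in> Iset \<gamma>"
  shows "level_ratio t = Gint g a b / Wint w a b"
  using w_pos[OF assms(3)]
  by (simp add: level_ratio_def level_fun_on_max_level_interval[OF assms(1,2)] mult_divide_eq_ennreal)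

lemma level_ratio_off_max_level_intervals:
  assumes "\<not> (\<exists>a b. max_level_interval \<gamma> w g a b \<and> t \<in> {a<..b})" "t \<in> Iset \<gamma>"
  shows "level_ratio t = g t / ennreal (w_ext t)"
  by (simp add: level_ratio_def level_fun_off_max_level_intervals[OF assms(1)] w_ext_eq[OF assms(2)])

lemma SUP_max_level_intervals:
  assumes ab: "max_level_interval \<gamma> w g a b" "t \<in> {a<..b}"
  shows "(SUP (c, d)\<in>{(c, d). max_level_interval \<gamma> w g c d}. Gint g c d / Wint w c d * indicator {c<..d} t)
    = Gint g a b / Wint w a b"
proof (rule antisym)
  show "(SUP (c, d)\<in>{(c, d). max_level_interval \<gamma> w g c d}. Gint g c d / Wint w c d * indicator {c<..d} t)
      \<le> Gint g a b / Wint w a b"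
  proof (rule SUP_least, clarify)
    fix c d assume "max_level_interval \<gamma> w g c d"
    then show "Gint g c d / Wint w c d * indicator {c<..d} t \<le> Gint g a b / Wint w a b"
      using max_level_interval_unique[OF _ ab(1) _ ab(2)] by (cases "t \<in> {c<..d}") auto
  qed
  show "Gint g a b / Wint w a b
      \<le> (SUP (c, d)\<in>{(c, d). max_level_interval \<gamma> w g c d}. Gint g c d / Wint w c d * indicator {c<..d} t)"
    using ab by (intro SUP_upper2[of "(a, b)"]) auto
qed

lemma level_ratio_measurable: "level_ratio \<in> borel_measurable (lebesgue_on (Iset \<gamma>))"
proof -
  let ?F = "{(a, b). max_level_interval \<gamma> w g a b}"
  define Y where "Y = (\<Union>(a, b)\<in>?F. {a<..b})"
  define S where "S t = (SUP (a, b)\<in>?F. Gint g a b / Wint w a b * indicator {a<..b} t)" for t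
  define h where "h t = (if t \<in> Y then S t else g t / ennreal (w_ext t))" for t
  have "Y \<in> sets borel"
    unfolding Y_def using countable_max_level_intervals by (intro sets.countable_UN') auto
  moreover have "S \<in> borel_measurable borel"
    unfolding S_def
  proof (intro borel_measurable_SUP countable_max_level_intervals)
    fix ab :: "real \<times> real"
    show "(\<lambda>t. case ab of (a, b) \<Rightarrow> Gint g a b / Wint w a b * indicator {a<..b} t) \<in> borel_measurable borel"
      by (cases ab) (simp add: borel_measurable_times_ennreal borel_measurable_indicator)
  qed
  moreover have "(\<lambda>t. g t / ennreal (w_ext t)) \<in> borel_measurable borel"
    using g_borel w_ext_borel by measurable
  ultimately have "h \<in> borel_measurable borel"
    unfolding h_def by (intro measurable_If_set) auto
  then have h: "h \<in> borel_measurable (lebesgue_on (Iset \<gamma>))"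
    by (simp add: measurable_completion measurable_restrict_space1)
  have "level_ratio t = h t" if t: "t \<in> Iset \<gamma>" for t
  proof (cases "\<exists>a b. max_level_interval \<gamma> w g a b \<and> t \<in> {a<..b}")
    case True
    then obtain a b where ab: "max_level_interval \<gamma> w g a b" "t \<in> {a<..b}" by blast
    then have "t \<in> Y" unfolding Y_def by blast
    then show ?thesis
      using level_ratio_on_max_level_interval[OF ab t] SUP_max_level_intervals[OF ab]
      by (simp add: h_def S_def)
  next
    case False
    then have "t \<notin> Y" by (auto simp: Y_def)
    then show ?thesis using level_ratio_off_max_level_intervals[OF False t] by (simp add: h_def)
  qed
  then show ?thesis using h by (subst measurable_cong) auto
qed

lemma Gint_div_Wint_ge:
  assumes ab: "0 \<le> a" "a < b" "ereal b \<le> \<gamma>" and c: "0 \<le> c"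
    and g_ge: "\<And>y. a < y \<Longrightarrow> y \<le> b \<Longrightarrow> ennreal c \<le> g y"
  shows "ennreal (c / w 0) \<le> Gint g a b / Wint w a b"
proof (rule ennreal_le_divideI)
  have w0: "0 < w 0" using w_pos zero_in_Iset[OF gamma_pos] by blast
  have "ennreal (c / w 0) * Wint w a b \<le> ennreal (c / w 0) * ennreal (w 0 * (b - a))"
    using Wint_le[of a b] ab by (intro mult_left_mono) auto
  also have "\<dots> = ennreal (c / w 0 * (w 0 * (b - a)))"
    using w0 ab c by (intro ennreal_mult[symmetric]) auto
  also have "\<dots> = ennreal (c * (b - a))"
    using w0 by simp
  also have "\<dots> = (\<integral>\<^sup>+ y. ennreal c * indicator {a<..b} y \<partial>lborel)"
    using ab c by (simp add: nn_integral_cmult_indicator ennreal_mult)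
  also have "\<dots> \<le> Gint g a b"
    unfolding Gint_def using g_ge by (intro nn_integral_mono) (auto simp: indicator_def)
  finally show "ennreal (c / w 0) * Wint w a b \<le> Gint g a b" .
  show "Wint w a b \<noteq> 0" using Wint_pos[OF ab] by simp
  show "Wint w a b \<noteq> \<infinity>" using Wint_finite[OF ab(1,3)] by simp
qed

lemma level_ratio_ge:
  assumes t0: "t0 \<in> Iset \<gamma>" and c: "0 \<le> c"
    and g_ge: "\<And>y. 0 < y \<Longrightarrow> y \<le> t0 \<Longrightarrow> ennreal c \<le> g y"
    and x: "0 < x" "x \<le> t0"
  shows "ennreal (c / w 0) \<le> level_ratio x"
proof -
  have x_I: "x \<in> Iset \<gamma>" using Iset_downward_closed x t0 by auto
  show ?thesis
  proof (cases "\<exists>a b. max_level_interval \<gamma> w g a b \<and> x \<in> {a<..b}")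
    case True
    then obtain a b where ab: "max_level_interval \<gamma> w g a b" "x \<in> {a<..b}" by blast
    then have level: "level_interval \<gamma> w g a b" by (simp add: max_level_interval_def)
    then have a: "0 \<le> a" and b: "ereal b \<le> \<gamma>" by (simp_all add: level_interval_def)
    define t where "t = min b t0"
    have t: "a < t" "t \<le> b" "t \<le> t0" using ab(2) x by (auto simp: t_def)
    have "ereal t \<le> \<gamma>" using t(2) b by (meson ereal_less_eq(3) order_trans)
    then have "ennreal (c / w 0) \<le> Gint g a t / Wint w a t"
      using a t c g_ge by (intro Gint_div_Wint_ge) auto
    also have "\<dots> \<le> Gint g a b / Wint w a b" using level t by (simp add: level_interval_def)
    also have "\<dots> = level_ratio x" using level_ratio_on_max_level_interval[OF ab x_I] by simp
    finally show ?thesis .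
  next
    case False
    have w0: "0 < w 0" using w_pos zero_in_Iset[OF gamma_pos] by blast
    have wx: "0 < w x" "w x \<le> w 0" using w_pos w_le_w0 x_I by auto
    have "c / w 0 * w x \<le> c / w 0 * w 0" using wx c w0 by (intro mult_left_mono) auto
    then have "ennreal (c / w 0) * ennreal (w_ext x) \<le> ennreal c"
      using c w0 wx w_ext_eq[OF x_I] by (simp add: ennreal_mult[symmetric] ennreal_leI)
    also have "\<dots> \<le> g x" using g_ge x by auto
    finally have "ennreal (c / w 0) \<le> g x / ennreal (w_ext x)"
      using wx w_ext_eq[OF x_I] by (intro ennreal_le_divideI) auto
    then show ?thesis using level_ratio_off_max_level_intervals[OF False x_I] by simp
  qed
qed

lemma rearr_mono_comp_level_ratio_ge:
  assumes h: "mono h" and "t0 \<in> Iset \<gamma>" "0 \<le> t" "t < t0"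
    and c: "\<And>x. 0 < x \<Longrightarrow> x \<le> t0 \<Longrightarrow> c \<le> level_ratio x"
  shows "h c \<le> rearr \<gamma> (\<lambda>x. h (level_ratio x)) t"
proof (rule rearr_ge_initial[OF _ assms(2-4)])
  show "(\<lambda>x. h (level_ratio x)) \<in> borel_measurable (lebesgue_on (Iset \<gamma>))"
    by (rule measurable_compose[OF level_ratio_measurable borel_measurable_mono_ennreal[OF h]])
  show "h c \<le> h (level_ratio x)" if "0 < x" "x \<le> t0" for x
    using c[OF that] by (rule monoD[OF h])
qed

lemma rearr_extE_level_ratio_ge:
  assumes p_mono: "\<And>x y. 0 \<le> x \<Longrightarrow> x \<le> y \<Longrightarrow> p x \<le> p y"
    and t0: "t0 \<in> Iset \<gamma>" and c: "0 \<le> c" and g_ge: "\<And>y. 0 < y \<Longrightarrow> y \<le> t0 \<Longrightarrow> ennreal c \<le> g y"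
    and k: "0 \<le> k" and t: "0 \<le> t" "t < t0"
  shows "ennreal (p (k * (c / w 0))) \<le> rearr \<gamma> (\<lambda>x. extE p (ennreal k * level_ratio x)) t"
proof -
  have "mono (\<lambda>z. extE p (ennreal k * z))"
    by (intro monoI monoD[OF mono_extE[OF p_mono]] mult_left_mono) auto
  moreover have "ennreal (c / w 0) \<le> level_ratio x" if "0 < x" "x \<le> t0" for x
    using level_ratio_ge[OF t0 c g_ge that] .
  ultimately have "extE p (ennreal k * ennreal (c / w 0))
      \<le> rearr \<gamma> (\<lambda>x. extE p (ennreal k * level_ratio x)) t"
    by (rule rearr_mono_comp_level_ratio_ge[OF _ t0 t])
  moreover have "extE p (ennreal k * ennreal (c / w 0)) = ennreal (p (k * (c / w 0)))"
    using k c w_pos[OF zero_in_Iset[OF gamma_pos]] by (simp add: extE_def ennreal_mult[symmetric])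
  ultimately show ?thesis by simp
qed

end

lemma rho_OL_compl_fun_ge:
  assumes \<phi>: "N_fun \<phi>" and w: "weight \<gamma> w" and t0: "t0 \<in> Iset \<gamma>"
    and L: "\<And>t. 0 \<le> t \<Longrightarrow> t < t0 \<Longrightarrow> ennreal L \<le> rearr \<gamma> G t"
  shows "ennreal ((L - \<phi> 1) * w t0 * t0) \<le> rho_OL (compl_fun \<phi>) \<gamma> w G"
proof -
  have "ennreal ((L - \<phi> 1) * w t0) * indicator {0..<t0} t
      \<le> extE (compl_fun \<phi>) (rearr \<gamma> G t) * ennreal (w t) * indicator (Iset \<gamma>) t" for t
  proof (cases "t \<in> {0..<t0}")
    case True
    then have t_I: "t \<in> Iset \<gamma>" using Iset_downward_closed[of t t0] t0 by auto
    have "ennreal (L - \<phi> 1) \<le> extE (compl_fun \<phi>) (rearr \<gamma> G t)"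
    proof (cases "rearr \<gamma> G t = \<infinity>")
      case False
      have "L \<le> enn2real (rearr \<gamma> G t)"
      proof (cases "0 \<le> L")
        case True
        then show ?thesis
          using enn2real_mono[OF L[of t]] \<open>t \<in> {0..<t0}\<close> False by (simp add: less_top)
      qed (use enn2real_nonneg[of "rearr \<gamma> G t"] in linarith)
      then have "L - \<phi> 1 \<le> compl_fun \<phi> (enn2real (rearr \<gamma> G t))"
        using compl_fun_ge[OF \<phi>, of "enn2real (rearr \<gamma> G t)"] by simp
      then show ?thesis using False by (simp add: extE_def ennreal_leI)
    qed (simp add: extE_def)
    moreover have "w t0 \<le> w t" using weight_antimono[OF w t_I t0] True by simp
    ultimately have "ennreal (L - \<phi> 1) * ennreal (w t0)
        \<le> extE (compl_fun \<phi>) (rearr \<gamma> G t) * ennreal (w t)"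
      by (intro mult_mono) (auto simp: ennreal_leI)
    then show ?thesis using True t_I weight_pos[OF w t0] by (simp add: ennreal_mult'')
  qed simp
  then have "(\<integral>\<^sup>+ t. ennreal ((L - \<phi> 1) * w t0) * indicator {0..<t0} t \<partial>lborel)
      \<le> rho_OL (compl_fun \<phi>) \<gamma> w G"
    unfolding rho_OL_def by (intro nn_integral_mono) (simp add: mult.assoc)
  moreover have "0 \<le> t0" using t0 by (simp add: Iset_def)
  ultimately show ?thesis by (simp add: nn_integral_cmult_indicator ennreal_mult'')
qed

lemma rho_OL_compl_fun_eventually_gt_1:
  fixes \<phi> p w :: "real \<Rightarrow> real"
  assumes \<phi>: "N_fun \<phi>"
    and der: "\<forall>u\<ge>0. ((\<lambda>h. (\<phi> (u + h) - \<phi> u) / h) \<longlongrightarrow> p u) (at_right 0)"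
    and w: "weight \<gamma> w" and t0: "0 < t0" "t0 \<in> Iset \<gamma>" and c: "0 < c"
  obtains K where "\<And>k G. K < k \<Longrightarrow> (\<And>t. 0 \<le> t \<Longrightarrow> t < t0 \<Longrightarrow> ennreal (p (k * c)) \<le> rearr \<gamma> G t)
    \<Longrightarrow> 1 < rho_OL (compl_fun \<phi>) \<gamma> w G"
proof -
  have wt0: "0 < w t0 * t0" using weight_pos[OF w t0(2)] t0(1) by simp
  obtain U where U: "0 < U" "\<And>u. U \<le> u \<Longrightarrow> \<phi> 1 + 2 / (w t0 * t0) \<le> \<phi> u / u"
    using N_fun_ratio_eventually_ge[OF \<phi>] by blast
  show thesis
  proof (rule that[of "U / c"])
    fix k G assume k: "U / c < k"
      and G: "\<And>t. 0 \<le> t \<Longrightarrow> t < t0 \<Longrightarrow> ennreal (p (k * c)) \<le> rearr \<gamma> G t"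
    have "U < k * c" using k c by (simp add: divide_less_eq)
    then have "\<phi> 1 + 2 / (w t0 * t0) \<le> \<phi> (k * c) / (k * c)" using U(2) by simp
    also have "\<dots> \<le> p (k * c)"
      by (rule N_fun_ratio_le_right_deriv[OF \<phi> der]) (use \<open>U < k * c\<close> U(1) in linarith)
    finally have "2 / (w t0 * t0) \<le> p (k * c) - \<phi> 1" by simp
    then have "2 \<le> (p (k * c) - \<phi> 1) * (w t0 * t0)"
      using wt0 by (simp add: pos_divide_le_eq)
    then have "ennreal 2 \<le> ennreal ((p (k * c) - \<phi> 1) * w t0 * t0)"
      by (simp add: ennreal_leI mult.assoc)
    also have "\<dots> \<le> rho_OL (compl_fun \<phi>) \<gamma> w G"
      by (rule rho_OL_compl_fun_ge[OF \<phi> w t0(2) G])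
    finally show "1 < rho_OL (compl_fun \<phi>) \<gamma> w G"
      by (rule less_le_trans[rotated]) simp
  qed
qed

theorem mainTheorem14:
  fixes \<phi> p w f :: "real \<Rightarrow> real" and \<gamma> :: ereal
  assumes "0 < \<gamma>"
    and "weight \<gamma> w"
    and "N_fun \<phi>"
    and "\<forall>u\<ge>0. ((\<lambda>h. (\<phi> (u + h) - \<phi> u) / h) \<longlongrightarrow> p u) (at_right 0)"
    and "f \<in> M_space \<phi> \<gamma> w"
    and "\<not> (AE t in lebesgue_on (Iset \<gamma>). f t = 0)"
  shows "Sup (ereal ` {k. 0 < k \<and>
           rho_OL (compl_fun \<phi>) \<gamma> w
             (\<lambda>t. extE p (ennreal k * fstar0 \<gamma> w f t / ennreal (w t))) \<le> 1}) < \<infinity>"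
proof -
  have f: "f \<in> borel_measurable (lebesgue_on (Iset \<gamma>))" using assms(5) by (simp add: M_space_def)
  obtain c t0 where c: "0 < c" and t0: "0 < t0" "t0 \<in> Iset \<gamma>"
    and f_ge: "\<And>t. t \<le> t0 \<Longrightarrow> ennreal c \<le> rearr \<gamma> (\<lambda>x. ennreal \<bar>f x\<bar>) t"
    using rearr_abs_lower_bound[OF f assms(1,6)] by blast
  interpret level_setting \<gamma> w "rearr \<gamma> (\<lambda>x. ennreal \<bar>f x\<bar>)"
    using assms(1,2) rearr_borel_measurable by unfold_locales
  have "0 < c / w 0" using c w_pos[OF zero_in_Iset[OF assms(1)]] by simp
  then obtain K where K: "\<And>k G. K < k
      \<Longrightarrow> (\<And>t. 0 \<le> t \<Longrightarrow> t < t0 \<Longrightarrow> ennreal (p (k * (c / w 0))) \<le> rearr \<gamma> G t)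
      \<Longrightarrow> 1 < rho_OL (compl_fun \<phi>) \<gamma> w G"
    using rho_OL_compl_fun_eventually_gt_1[OF assms(3,4,2) t0] by blast
  have p_mono: "p x \<le> p y" if "0 \<le> x" "x \<le> y" for x y
    using convex_on_right_deriv_mono[OF _ assms(4) that] assms(3) by (simp add: N_fun_def Orlicz_fun_def)
  have "k \<le> K" if k: "0 < k"
    and rho: "rho_OL (compl_fun \<phi>) \<gamma> w (\<lambda>t. extE p (ennreal k * fstar0 \<gamma> w f t / ennreal (w t))) \<le> 1" for k
  proof (rule ccontr)
    assume "\<not> k \<le> K"
    moreover have "ennreal (p (k * (c / w 0))) \<le> rearr \<gamma> (\<lambda>x. extE p (ennreal k * level_ratio x)) t"
      if "0 \<le> t" "t < t0" for t
      using p_mono c f_ge k that by (intro rearr_extE_level_ratio_ge[OF _ t0(2)]) auto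
    moreover have "(\<lambda>t. extE p (ennreal k * fstar0 \<gamma> w f t / ennreal (w t)))
        = (\<lambda>x. extE p (ennreal k * level_ratio x))"
      by (simp add: level_ratio_def fstar0_def ennreal_times_divide)
    ultimately show False using K[of k] rho by fastforce
  qed
  then show ?thesis by (intro le_less_trans[OF Sup_least[where z = "ereal K"]]) auto
qed

end
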